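(* Let $n\ge2$ and $\pi\in\mathfrak S_{n-1}(2413,4213)$, and write $\mathrm{AVA}(\pi)=\{n=k_1>k_2>\dots>k_m=1\}$. Then for each $1\le j\le m$, $$\mathrm{AVA}(T_{k_j}(\pi))=\{n+1,\,k_j+1\}\cup\{k_j,k_{j+1},\dots,k_m\}.$$
   Context: $\mathfrak S_n(2413,4213)$ is the set of permutations of $[n]$ with no subsequence order isomorphic to $2413$ or $4213$. For $k\in[n]$ and $\pi=\pi_1\cdots\pi_{n-1}\in\mathfrak S_{n-1}$, define $T_k(\pi)=\pi'_1\pi'_2\cdots\pi'_{n-1}k\in\mathfrak S_n$, where $\pi'_i=\pi_i+1$ if $\pi_i\ge k$ and $\pi'_i=\pi_i$ otherwise. For $\pi\in\mathfrak S_{n-1}(2413,4213)$, $\mathrm{AVA}(\pi)=\{k\in[n]:T_k(\pi)\in\mathfrak S_n(2413,4213)\}$; it always contains $n$ and $1$. *)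

theory Defs
  imports Main
begin

text \<open>Permutations of [n] are represented as lists in one-line notation.\<close>

definition is_perm :: "nat \<Rightarrow> nat list \<Rightarrow> bool" where
  "is_perm n p \<longleftrightarrow> length p = n \<and> distinct p \<and> set p = {1..n}"

definition contains :: "nat list \<Rightarrow> nat list \<Rightarrow> bool" where
  "contains p s \<longleftrightarrow> (\<exists>is :: nat list. length is = length s \<and> sorted_wrt (<) is
      \<and> (\<forall>i\<in>set is. i < length p)
      \<and> (\<forall>a<length s. \<forall>b<length s. (p ! (is ! a) < p ! (is ! b)) \<longleftrightarrow> (s ! a < s ! b)))"

definition Av :: "nat \<Rightarrow> nat list set" where
  "Av n = {p. is_perm n p \<and> \<not> contains p [2,4,1,3] \<and> \<not> contains p [4,2,1,3]}"

definition T :: "nat \<Rightarrow> nat list \<Rightarrow> nat list" where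
  "T k p = map (\<lambda>x. if x \<ge> k then x + 1 else x) p @ [k]"

definition AVA :: "nat list \<Rightarrow> nat set" where
  "AVA p = {k \<in> {1..length p + 1}. T k p \<in> Av (length p + 1)}"

end

theory Submission imports Defs begin

text \<open>A permutation contains 2413 or 4213 exactly when some positions i0 < i1 < i2 < i3 carry
  values with p!i2 < min (p!i0) (p!i1) < p!i3 < max (p!i0) (p!i1). Appending a new last value a
  (after shifting) creates such an occurrence iff p already has one or a is obstructed: some
  i < j < l have p!l < min (p!i) (p!j) < a \<le> max (p!i) (p!j). Hence AVA p is the set of
  unobstructed values. After appending k, the values \<le> k keep their status, k + 1 inherits the
  (free) status of k, n + 1 exceeds every entry, and each value strictly between k + 1 and n + 1
  is obstructed by the entries k + 1 and n + 1 followed by the final entry k.\<close>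

lemma contains_length4_iff:
  "contains p [s0, s1, s2, s3] \<longleftrightarrow>
     (\<exists>i0 i1 i2 i3. i0 < i1 \<and> i1 < i2 \<and> i2 < i3 \<and> i3 < length p \<and>
        (\<forall>a<4. \<forall>b<4. (p ! ([i0, i1, i2, i3] ! a) < p ! ([i0, i1, i2, i3] ! b))
                     \<longleftrightarrow> ([s0, s1, s2, s3] ! a < [s0, s1, s2, s3] ! b)))"
  (is "?lhs \<longleftrightarrow> ?rhs")
proof
  assume ?lhs
  then obtain "is" where "length is = length [s0, s1, s2, s3]" "sorted_wrt (<) is"
    "\<forall>i\<in>set is. i < length p"
    "\<forall>a<4. \<forall>b<4. (p ! (is ! a) < p ! (is ! b)) \<longleftrightarrow> ([s0, s1, s2, s3] ! a < [s0, s1, s2, s3] ! b)"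
    unfolding contains_def by auto
  moreover from \<open>length is = length [s0, s1, s2, s3]\<close> obtain i0 i1 i2 i3
    where "is = [i0, i1, i2, i3]"
    by (auto simp: length_Suc_conv)
  ultimately show ?rhs by (intro exI[of _ i0] exI[of _ i1] exI[of _ i2] exI[of _ i3]) simp
next
  assume ?rhs
  then obtain i0 i1 i2 i3 where "i0 < i1" "i1 < i2" "i2 < i3" "i3 < length p"
    "\<forall>a<4. \<forall>b<4. (p ! ([i0, i1, i2, i3] ! a) < p ! ([i0, i1, i2, i3] ! b))
                 \<longleftrightarrow> ([s0, s1, s2, s3] ! a < [s0, s1, s2, s3] ! b)"
    by blast
  then show ?lhs unfolding contains_def by (intro exI[of _ "[i0, i1, i2, i3]"]) simp
qed

lemma order_pattern_2413_iff:
  fixes p :: "nat list"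
  shows
  "(\<forall>a<4. \<forall>b<4. (p ! ([i0, i1, i2, i3] ! a) < p ! ([i0, i1, i2, i3] ! b)) \<longleftrightarrow>
      ([2, 4, 1, 3] ! a < ([2, 4, 1, 3] :: nat list) ! b))
   \<longleftrightarrow> p ! i2 < p ! i0 \<and> p ! i0 < p ! i3 \<and> p ! i3 < p ! i1"
  by (simp add: less_Suc_eq numeral_eq_Suc) auto

lemma order_pattern_4213_iff:
  fixes p :: "nat list"
  shows
  "(\<forall>a<4. \<forall>b<4. (p ! ([i0, i1, i2, i3] ! a) < p ! ([i0, i1, i2, i3] ! b)) \<longleftrightarrow>
      ([4, 2, 1, 3] ! a < ([4, 2, 1, 3] :: nat list) ! b))
   \<longleftrightarrow> p ! i2 < p ! i1 \<and> p ! i1 < p ! i3 \<and> p ! i3 < p ! i0"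
  by (simp add: less_Suc_eq numeral_eq_Suc) auto

definition occurs_2413_or_4213 :: "nat list \<Rightarrow> bool" where
  "occurs_2413_or_4213 p \<longleftrightarrow> (\<exists>i0 i1 i2 i3. i0 < i1 \<and> i1 < i2 \<and> i2 < i3 \<and> i3 < length p \<and>
     p ! i2 < min (p ! i0) (p ! i1) \<and> min (p ! i0) (p ! i1) < p ! i3 \<and> p ! i3 < max (p ! i0) (p ! i1))"

lemma between_min_max_iff:
  fixes a b c d :: "'a::linorder"
  shows "(c < a \<and> a < d \<and> d < b) \<or> (c < b \<and> b < d \<and> d < a) \<longleftrightarrow>
         c < min a b \<and> min a b < d \<and> d < max a b"
  by (auto simp: min_def max_def)

lemma avoids_2413_4213_iff:
  "\<not> contains p [2, 4, 1, 3] \<and> \<not> contains p [4, 2, 1, 3] \<longleftrightarrow> \<not> occurs_2413_or_4213 p"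
  unfolding contains_length4_iff order_pattern_2413_iff order_pattern_4213_iff
    occurs_2413_or_4213_def between_min_max_iff[symmetric] by blast

definition obstructed :: "nat list \<Rightarrow> nat \<Rightarrow> bool" where
  "obstructed p a \<longleftrightarrow> (\<exists>i j l. i < j \<and> j < l \<and> l < length p \<and>
     p ! l < min (p ! i) (p ! j) \<and> min (p ! i) (p ! j) < a \<and> a \<le> max (p ! i) (p ! j))"

definition shift :: "nat \<Rightarrow> nat \<Rightarrow> nat" where
  "shift k x = (if k \<le> x then x + 1 else x)"

lemma strict_mono_shift: "strict_mono (shift k)"
  by (auto simp: strict_mono_def shift_def)

lemma shift_neq: "shift k x \<noteq> k"
  by (simp add: shift_def)

lemma T_eq_map_shift: "T k p = map (shift k) p @ [k]"
  by (simp add: T_def shift_def)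

lemma nth_T:
  "i \<le> length p \<Longrightarrow> T k p ! i = (if i < length p then shift k (p ! i) else k)"
  by (simp add: T_eq_map_shift nth_append)

lemma length_T [simp]: "length (T k p) = Suc (length p)"
  by (simp add: T_def)

lemma strict_mono_between_min_max_iff:
  fixes f :: "'a::linorder \<Rightarrow> 'b::linorder"
  assumes "strict_mono f"
  shows "f c < min (f x) (f y) \<and> min (f x) (f y) < f d \<and> f d < max (f x) (f y) \<longleftrightarrow>
         c < min x y \<and> min x y < d \<and> d < max x y"
  using strict_mono_less[OF assms] strict_mono_less_eq[OF assms] by (auto simp: min_def max_def)

lemma shift_obstruction_iff:
  assumes "a \<le> k \<and> b = a \<or> a = k \<and> b = k + 1"
  shows "shift k c < min (shift k x) (shift k y) \<and> min (shift k x) (shift k y) < b \<and>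
           b \<le> max (shift k x) (shift k y) \<longleftrightarrow>
         c < min x y \<and> min x y < a \<and> a \<le> max x y"
  using assms by (auto simp: shift_def min_def max_def)

lemma obstructed_T_iff:
  assumes "a \<le> k \<and> b = a \<or> a = k \<and> b = k + 1"
  shows "obstructed (T k p) b \<longleftrightarrow> obstructed p a"
proof
  assume "obstructed (T k p) b"
  then obtain i j l where ijl: "i < j" "j < l" "l \<le> length p"
    and obs: "T k p ! l < min (T k p ! i) (T k p ! j)" "min (T k p ! i) (T k p ! j) < b"
      "b \<le> max (T k p ! i) (T k p ! j)"
    unfolding obstructed_def by auto
  have "l \<noteq> length p"
  proof
    assume "l = length p"
    then have "k < min (T k p ! i) (T k p ! j)" using obs(1) by (simp add: nth_T)
    then show False using obs(2) assms by linarith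
  qed
  with ijl obs show "obstructed p a"
    unfolding obstructed_def shift_obstruction_iff[OF assms, symmetric]
    by (intro exI[of _ i] exI[of _ j] exI[of _ l]) (simp add: nth_T)
next
  assume "obstructed p a"
  then obtain i j l where "i < j" "j < l" "l < length p"
    "shift k (p ! l) < min (shift k (p ! i)) (shift k (p ! j))"
    "min (shift k (p ! i)) (shift k (p ! j)) < b" "b \<le> max (shift k (p ! i)) (shift k (p ! j))"
    unfolding obstructed_def shift_obstruction_iff[OF assms, symmetric] by auto
  then show "obstructed (T k p) b"
    unfolding obstructed_def by (intro exI[of _ i] exI[of _ j] exI[of _ l]) (simp add: nth_T)
qed

text \<open>The new last entry can only play the role of the 3 in an occurrence.\<close>

lemma occurs_2413_or_4213_T_iff:
  "occurs_2413_or_4213 (T k p) \<longleftrightarrow> occurs_2413_or_4213 p \<or> obstructed p k"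
proof
  assume "occurs_2413_or_4213 (T k p)"
  then obtain i0 i1 i2 i3 where idx: "i0 < i1" "i1 < i2" "i2 < i3" "i3 \<le> length p"
    and occ: "T k p ! i2 < min (T k p ! i0) (T k p ! i1)" "min (T k p ! i0) (T k p ! i1) < T k p ! i3"
      "T k p ! i3 < max (T k p ! i0) (T k p ! i1)"
    unfolding occurs_2413_or_4213_def by auto
  show "occurs_2413_or_4213 p \<or> obstructed p k"
  proof (cases "i3 < length p")
    case True
    with idx occ have "shift k (p ! i2) < min (shift k (p ! i0)) (shift k (p ! i1)) \<and>
        min (shift k (p ! i0)) (shift k (p ! i1)) < shift k (p ! i3) \<and>
        shift k (p ! i3) < max (shift k (p ! i0)) (shift k (p ! i1))"
      by (simp add: nth_T)
    then have "occurs_2413_or_4213 p"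
      unfolding strict_mono_between_min_max_iff[OF strict_mono_shift] occurs_2413_or_4213_def
      using idx True by blast
    then show ?thesis ..
  next
    case False
    with idx occ have "shift k (p ! i2) < min (shift k (p ! i0)) (shift k (p ! i1)) \<and>
        min (shift k (p ! i0)) (shift k (p ! i1)) < k \<and> k \<le> max (shift k (p ! i0)) (shift k (p ! i1))"
      by (simp add: nth_T)
    then have "p ! i2 < min (p ! i0) (p ! i1) \<and> min (p ! i0) (p ! i1) < k \<and> k \<le> max (p ! i0) (p ! i1)"
      using shift_obstruction_iff[of k k k] by simp
    then have "obstructed p k"
      unfolding obstructed_def using idx False by auto
    then show ?thesis ..
  qed
next
  assume "occurs_2413_or_4213 p \<or> obstructed p k"
  then show "occurs_2413_or_4213 (T k p)"
  proof
    assume "occurs_2413_or_4213 p"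
    then obtain i0 i1 i2 i3 where idx: "i0 < i1" "i1 < i2" "i2 < i3" "i3 < length p"
      and "p ! i2 < min (p ! i0) (p ! i1) \<and> min (p ! i0) (p ! i1) < p ! i3 \<and>
        p ! i3 < max (p ! i0) (p ! i1)"
      unfolding occurs_2413_or_4213_def by blast
    then have "shift k (p ! i2) < min (shift k (p ! i0)) (shift k (p ! i1)) \<and>
        min (shift k (p ! i0)) (shift k (p ! i1)) < shift k (p ! i3) \<and>
        shift k (p ! i3) < max (shift k (p ! i0)) (shift k (p ! i1))"
      using strict_mono_between_min_max_iff[OF strict_mono_shift] by blast
    with idx show ?thesis unfolding occurs_2413_or_4213_def
      by (intro exI[of _ i0] exI[of _ i1] exI[of _ i2] exI[of _ i3]) (simp add: nth_T)
  next
    assume "obstructed p k"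
    then obtain i j l where idx: "i < j" "j < l" "l < length p"
      and "p ! l < min (p ! i) (p ! j) \<and> min (p ! i) (p ! j) < k \<and> k \<le> max (p ! i) (p ! j)"
      unfolding obstructed_def by blast
    then have "shift k (p ! l) < min (shift k (p ! i)) (shift k (p ! j)) \<and>
        min (shift k (p ! i)) (shift k (p ! j)) < k \<and> k \<le> max (shift k (p ! i)) (shift k (p ! j))"
      using shift_obstruction_iff[of k k k] by simp
    moreover have "k \<noteq> max (shift k (p ! i)) (shift k (p ! j))"
      by (metis max_def shift_neq)
    ultimately show ?thesis using idx unfolding occurs_2413_or_4213_def
      by (intro exI[of _ i] exI[of _ j] exI[of _ l] exI[of _ "length p"]) (simp add: nth_T)
  qed
qed

lemma shift_image_atLeastAtMost:
  assumes "1 \<le> k" "k \<le> N + 1"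
  shows "shift k ` {1..N} = {1..N + 1} - {k}"
proof
  show "shift k ` {1..N} \<subseteq> {1..N + 1} - {k}"
    using assms by (auto simp: shift_def)
next
  show "{1..N + 1} - {k} \<subseteq> shift k ` {1..N}"
  proof
    fix x assume x: "x \<in> {1..N + 1} - {k}"
    show "x \<in> shift k ` {1..N}"
    proof (cases "x < k")
      case True
      with x assms have "x \<in> {1..N}" "shift k x = x" by (auto simp: shift_def)
      then show ?thesis by (metis image_eqI)
    next
      case False
      with x assms have "x - 1 \<in> {1..N}" "shift k (x - 1) = x" by (auto simp: shift_def)
      then show ?thesis by (metis image_eqI)
    qed
  qed
qed

lemma is_perm_T:
  assumes "is_perm N p" "1 \<le> k" "k \<le> N + 1"
  shows "is_perm (N + 1) (T k p)"
proof -
  have "set (T k p) = shift k ` {1..N} \<union> {k}"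
    using assms(1) by (simp add: T_eq_map_shift is_perm_def)
  also have "\<dots> = {1..N + 1}"
    using shift_image_atLeastAtMost[OF assms(2,3)] assms(2,3) by auto
  finally have "set (T k p) = {1..N + 1}" .
  moreover have "distinct (map (shift k) p @ [k])"
    using assms(1) strict_mono_imp_inj_on[OF strict_mono_shift] shift_neq[symmetric]
    by (auto simp: is_perm_def distinct_map)
  ultimately show ?thesis
    using assms(1) by (simp add: is_perm_def T_eq_map_shift)
qed

lemma AVA_eq_not_obstructed:
  assumes "p \<in> Av N"
  shows "AVA p = {a \<in> {1..N + 1}. \<not> obstructed p a}"
proof -
  have "is_perm N p" and "\<not> occurs_2413_or_4213 p"
    using assms avoids_2413_4213_iff unfolding Av_def by auto
  then show ?thesis
    unfolding AVA_def Av_def avoids_2413_4213_iff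
    using is_perm_T by (auto simp: is_perm_def occurs_2413_or_4213_T_iff)
qed

lemma not_obstructed_above:
  assumes "\<forall>x\<in>set q. x < a"
  shows "\<not> obstructed q a"
  using assms unfolding obstructed_def by (auto simp: max_def not_le)

text \<open>The values k + 1 and N + 1 of T k p, followed by the final entry k, obstruct every a
  strictly between them.\<close>

lemma obstructed_T_between:
  assumes "is_perm N p" "1 \<le> k" "k + 1 < a" "a \<le> N + 1"
  shows "obstructed (T k p) a"
proof -
  have len: "length p = N" and "k \<in> set p" "N \<in> set p"
    using assms unfolding is_perm_def by auto
  then obtain ik iN where ik: "ik < N" "p ! ik = k" and iN: "iN < N" "p ! iN = N"
    by (metis in_set_conv_nth)
  have "T k p ! ik = k + 1" "T k p ! iN = N + 1" "T k p ! N = k"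
    using ik iN len assms by (simp_all add: nth_T shift_def)
  moreover have "ik \<noteq> iN"
    using ik iN assms by auto
  ultimately have "min (T k p ! min ik iN) (T k p ! max ik iN) = k + 1"
    "max (T k p ! min ik iN) (T k p ! max ik iN) = N + 1"
    "T k p ! N = k" "min ik iN < max ik iN"
    using assms by (auto simp: min_def max_def)
  then show ?thesis
    unfolding obstructed_def using ik iN len assms
    by (intro exI[of _ "min ik iN"] exI[of _ "max ik iN"] exI[of _ N]) simp
qed

lemma set_drop_sorted_wrt_greater:
  fixes ks :: "'a::linorder list"
  assumes "sorted_wrt (>) ks" "j < length ks"
  shows "set (drop j ks) = {x \<in> set ks. x \<le> ks ! j}"
proof -
  have ks: "ks = take j ks @ ks ! j # drop (Suc j) ks"
    using assms(2) by (simp add: id_take_nth_drop)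
  then have "\<forall>x\<in>set (take j ks). ks ! j < x" "\<forall>y\<in>set (drop (Suc j) ks). y < ks ! j"
    using assms(1) by (metis list.set_intros(1) sorted_wrt.simps(2) sorted_wrt_append)+
  moreover have "set ks = set (take j ks) \<union> set (drop j ks)"
    by (metis append_take_drop_id set_append)
  moreover have "drop j ks = ks ! j # drop (Suc j) ks"
    using assms(2) by (simp add: Cons_nth_drop_Suc)
  ultimately show ?thesis by fastforce
qed

lemma AVA_T:
  assumes "p \<in> Av N" "k \<in> AVA p"
  shows "AVA (T k p) = {N + 2, k + 1} \<union> {a \<in> AVA p. a \<le> k}"
proof -
  have perm: "is_perm N p"
    using assms(1) by (simp add: Av_def)
  have k: "1 \<le> k" "k \<le> N + 1" "\<not> obstructed p k"
    using assms AVA_eq_not_obstructed by auto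
  have "T k p \<in> Av (N + 1)"
    using assms(2) perm by (simp add: AVA_def is_perm_def)
  then have AVA_Tk: "AVA (T k p) = {a \<in> {1..N + 2}. \<not> obstructed (T k p) a}"
    using AVA_eq_not_obstructed by fastforce
  have values_T: "\<forall>x\<in>set (T k p). x < N + 2"
    using is_perm_T[OF perm k(1,2)] by (auto simp: is_perm_def)
  have "\<not> obstructed (T k p) a \<longleftrightarrow> a \<le> k \<and> \<not> obstructed p a \<or> a = k + 1 \<or> a = N + 2"
    if a_range: "1 \<le> a" "a \<le> N + 2" for a
  proof -
    consider "a \<le> k" | "a = k + 1" | "k + 1 < a" "a \<le> N + 1" | "a = N + 2"
      using a_range by linarith
    then show ?thesis
    proof cases
      case 1
      then show ?thesis using obstructed_T_iff[of a k a] k(2) by auto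
    next
      case 2
      then show ?thesis using obstructed_T_iff[of k k "k + 1"] k(3) by auto
    next
      case 3
      then show ?thesis using obstructed_T_between[OF perm k(1)] by auto
    next
      case 4
      then show ?thesis using not_obstructed_above[OF values_T] by auto
    qed
  qed
  then have "AVA (T k p) = {a \<in> {1..N + 2}. a \<le> k \<and> \<not> obstructed p a \<or> a = k + 1 \<or> a = N + 2}"
    unfolding AVA_Tk by auto
  also have "\<dots> = {N + 2, k + 1} \<union> {a \<in> AVA p. a \<le> k}"
    unfolding AVA_eq_not_obstructed[OF assms(1)] using k(1,2) by force
  finally show ?thesis .
qed

theorem lemma5p3:
  fixes n :: nat and p :: "nat list" and ks :: "nat list"
  assumes "n \<ge> 2"
    and "p \<in> Av (n - 1)"
    and "sorted_wrt (>) ks" and "set ks = AVA p"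
    and "j < length ks"
  shows "AVA (T (ks ! j) p) = {n + 1, ks ! j + 1} \<union> set (drop j ks)"
proof -
  have "ks ! j \<in> AVA p"
    using assms(4,5) nth_mem by blast
  then have "AVA (T (ks ! j) p) = {n - 1 + 2, ks ! j + 1} \<union> {a \<in> AVA p. a \<le> ks ! j}"
    using AVA_T[OF assms(2)] by blast
  also have "{a \<in> AVA p. a \<le> ks ! j} = set (drop j ks)"
    using set_drop_sorted_wrt_greater[OF assms(3,5)] assms(4) by simp
  finally show ?thesis
    using assms(1) by simp
qed

end
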